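(* Let $M$ be a matroid, let $S,T$ be disjoint subsets of $E(M)$, let $k:=\kappa_M(S,T)$, and let $U$ be a set with $S\subseteq U\subseteq E(M)-T$ and $\lambda_M(U)=k$. If $e\in E(M)-(T\cup U)$ satisfies $\kappa_{M/e}(S,T)\neq\kappa_M(S,T)$, then $\kappa_{M/e}(U,T)\neq\kappa_M(U,T)$.
   Context: For a matroid $M$ with ground set $E$, $\lambda_M(X):=r_M(X)+r_M(E-X)-r(M)$, and for disjoint $S,T\subseteq E$, $\kappa_M(S,T):=\min\{\lambda_M(X):S\subseteq X\subseteq E-T\}$. *)

theory Defs
  imports Main
begin

definition matroid :: "'a set \<Rightarrow> 'a set set \<Rightarrow> bool" where
  "matroid E Ind \<longleftrightarrow> finite E \<and> (\<forall>I\<in>Ind. I \<subseteq> E) \<and> {} \<in> Ind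
     \<and> (\<forall>I J. J \<in> Ind \<longrightarrow> I \<subseteq> J \<longrightarrow> I \<in> Ind)
     \<and> (\<forall>I J. I \<in> Ind \<longrightarrow> J \<in> Ind \<longrightarrow> card I < card J \<longrightarrow>
           (\<exists>x\<in>J - I. insert x I \<in> Ind))"

definition mrank :: "'a set set \<Rightarrow> 'a set \<Rightarrow> nat" where
  "mrank Ind X = Max (card ` {I. I \<in> Ind \<and> I \<subseteq> X})"

definition mlambda :: "'a set \<Rightarrow> 'a set set \<Rightarrow> 'a set \<Rightarrow> int" where
  "mlambda E Ind X = int (mrank Ind X) + int (mrank Ind (E - X)) - int (mrank Ind E)"

definition mkappa :: "'a set \<Rightarrow> 'a set set \<Rightarrow> 'a set \<Rightarrow> 'a set \<Rightarrow> int" where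
  "mkappa E Ind S T = Min {mlambda E Ind X | X. S \<subseteq> X \<and> X \<subseteq> E - T}"

definition contract_ground :: "'a set \<Rightarrow> 'a \<Rightarrow> 'a set" where
  "contract_ground E e = E - {e}"

definition contract_indep :: "'a set set \<Rightarrow> 'a \<Rightarrow> 'a set set" where
  "contract_indep Ind e = {I. e \<notin> I \<and>
      (if {e} \<in> Ind then insert e I \<in> Ind else I \<in> Ind)}"

end

theory Submission
  imports Defs
begin

text \<open>For X avoiding e we have r_{M/e}(X) = r(X \<union> e) - r(e), so
  \<lambda>_{M/e}(X) = r(X \<union> e) + r(E - X) - r(M) - r(e). Submodularity of r applied to
  X \<union> e and U, and to their complements, gives the uncrossing inequality
  \<lambda>_{M/e}(X \<union> U) + \<lambda>_M(X \<inter> U) \<le> \<lambda>_{M/e}(X) + \<lambda>_M(U) whenever e \<notin> U.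
  If contracting e drops \<kappa>(S,T) below k = \<lambda>_M(U), there is an X \<supseteq> S avoiding T
  with \<lambda>_{M/e}(X) < k; as X \<inter> U still contains S, \<lambda>_M(X \<inter> U) \<ge> k, hence
  \<lambda>_{M/e}(X \<union> U) < k, whereas \<kappa>_M(U,T) = k because U is a minimiser for (S,T).\<close>

lemma mrank_eqI:
  assumes "B \<in> Ind" "B \<subseteq> X" "\<And>I. I \<in> Ind \<Longrightarrow> I \<subseteq> X \<Longrightarrow> card I \<le> card B"
  shows "mrank Ind X = card B"
proof -
  have "card ` {I. I \<in> Ind \<and> I \<subseteq> X} \<subseteq> {..card B}" using assms(3) by auto
  then have "finite (card ` {I. I \<in> Ind \<and> I \<subseteq> X})" by (rule finite_subset) simp
  then show ?thesis unfolding mrank_def using assms by (intro Max_eqI) auto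
qed

context
  fixes E :: "'a set" and Ind :: "'a set set"
  assumes matroid: "matroid E Ind"
begin

lemma matroid_finite_ground: "finite E"
  using matroid unfolding matroid_def by blast

lemma matroid_indep_subset: "I \<in> Ind \<Longrightarrow> I \<subseteq> E"
  using matroid unfolding matroid_def by blast

lemma matroid_empty_indep: "{} \<in> Ind"
  using matroid unfolding matroid_def by blast

lemma matroid_indep_subset_closed: "J \<in> Ind \<Longrightarrow> I \<subseteq> J \<Longrightarrow> I \<in> Ind"
  using matroid unfolding matroid_def by blast

lemma matroid_augment: "I \<in> Ind \<Longrightarrow> J \<in> Ind \<Longrightarrow> card I < card J \<Longrightarrow> \<exists>x\<in>J - I. insert x I \<in> Ind"
  using matroid unfolding matroid_def by blast

lemma matroid_indep_finite: "I \<in> Ind \<Longrightarrow> finite I"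
  using matroid_indep_subset matroid_finite_ground by (rule finite_subset)

lemma finite_indep_subsets: "finite {I. I \<in> Ind \<and> I \<subseteq> X}"
proof (rule finite_subset)
  show "{I. I \<in> Ind \<and> I \<subseteq> X} \<subseteq> Pow E" using matroid_indep_subset by auto
qed (simp add: matroid_finite_ground)

lemma card_le_mrank: "I \<in> Ind \<Longrightarrow> I \<subseteq> X \<Longrightarrow> card I \<le> mrank Ind X"
  unfolding mrank_def using finite_indep_subsets by (intro Max_ge) auto

lemma mrank_attained: obtains I where "I \<in> Ind" "I \<subseteq> X" "card I = mrank Ind X"
proof -
  have "mrank Ind X \<in> card ` {I. I \<in> Ind \<and> I \<subseteq> X}"
    unfolding mrank_def using finite_indep_subsets matroid_empty_indep by (intro Max_in) auto
  then show ?thesis using that by auto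
qed

lemma indep_extends_to_max:
  "J \<in> Ind \<Longrightarrow> J \<subseteq> X \<Longrightarrow> \<exists>B. J \<subseteq> B \<and> B \<in> Ind \<and> B \<subseteq> X \<and> card B = mrank Ind X"
proof (induction "mrank Ind X - card J" arbitrary: J rule: less_induct)
  case less
  show ?case
  proof (cases "card J < mrank Ind X")
    case False
    then have "card J = mrank Ind X" using card_le_mrank[OF less(2,3)] by simp
    then show ?thesis using less(2,3) by blast
  next
    case True
    obtain I where I: "I \<in> Ind" "I \<subseteq> X" "card I = mrank Ind X" by (rule mrank_attained)
    obtain x where x: "x \<in> I - J" "insert x J \<in> Ind"
      using matroid_augment[OF less(2) I(1)] True I(3) by auto
    have "card (insert x J) = Suc (card J)" using x(1) matroid_indep_finite[OF less(2)] by simp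
    then have "mrank Ind X - card (insert x J) < mrank Ind X - card J" using True by simp
    moreover have "insert x J \<subseteq> X" using x(1) I(2) less(3) by blast
    ultimately show ?thesis using less(1)[of "insert x J"] x(2) by blast
  qed
qed

lemma mrank_submodular: "mrank Ind (X \<union> Y) + mrank Ind (X \<inter> Y) \<le> mrank Ind X + mrank Ind Y"
proof -
  obtain B0 where B0: "B0 \<in> Ind" "B0 \<subseteq> X \<inter> Y" "card B0 = mrank Ind (X \<inter> Y)"
    by (rule mrank_attained)
  obtain B where B: "B0 \<subseteq> B" "B \<in> Ind" "B \<subseteq> X \<union> Y" "card B = mrank Ind (X \<union> Y)"
    using indep_extends_to_max[OF B0(1), of "X \<union> Y"] B0(2) by blast
  have fin: "finite B" by (rule matroid_indep_finite[OF B(2)])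
  have "card (B \<inter> X) \<le> mrank Ind X" "card (B \<inter> Y) \<le> mrank Ind Y"
    using matroid_indep_subset_closed[OF B(2)] by (simp_all add: card_le_mrank)
  moreover have "card (B \<inter> X) + card (B \<inter> Y) = card B + card (B \<inter> X \<inter> Y)"
  proof -
    have "(B \<inter> X) \<union> (B \<inter> Y) = B" "(B \<inter> X) \<inter> (B \<inter> Y) = B \<inter> X \<inter> Y" using B(3) by auto
    then show ?thesis using card_Un_Int[of "B \<inter> X" "B \<inter> Y"] fin by simp
  qed
  moreover have "card B0 \<le> card (B \<inter> X \<inter> Y)"
    using B0(2) B(1) fin by (intro card_mono) auto
  ultimately show ?thesis using B0(3) B(4) by linarith
qed

lemma mrank_contract:
  assumes "e \<notin> X"
  shows "int (mrank (contract_indep Ind e) X) = int (mrank Ind (insert e X)) - int (mrank Ind {e})"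
proof (cases "{e} \<in> Ind")
  case True
  have Ind': "contract_indep Ind e = {I. e \<notin> I \<and> insert e I \<in> Ind}"
    unfolding contract_indep_def using True by simp
  have "mrank Ind {e} = card {e}"
    using True card_mono[of "{e}"] by (intro mrank_eqI) auto
  moreover obtain B where B: "e \<in> B" "B \<in> Ind" "B \<subseteq> insert e X" "card B = mrank Ind (insert e X)"
    using indep_extends_to_max[OF True, of "insert e X"] by auto
  moreover have "mrank (contract_indep Ind e) X = card (B - {e})"
  proof (rule mrank_eqI)
    show "B - {e} \<in> contract_indep Ind e" unfolding Ind' using B by (simp add: insert_absorb)
    show "B - {e} \<subseteq> X" using B(3) by auto
    fix I assume "I \<in> contract_indep Ind e" "I \<subseteq> X"
    then have I: "insert e I \<in> Ind" "e \<notin> I" "insert e I \<subseteq> insert e X" unfolding Ind' by auto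
    then have "card (insert e I) \<le> card B" using card_le_mrank B(4) by simp
    moreover have "finite I" using matroid_indep_finite[OF I(1)] by simp
    ultimately have "Suc (card I) \<le> card B" using I(2) by simp
    then show "card I \<le> card (B - {e})" using B(1) by simp
  qed
  moreover have "int (card (B - {e})) = int (card B) - 1"
    using card_Suc_Diff1[OF matroid_indep_finite[OF B(2)] B(1)] by linarith
  ultimately show ?thesis by simp
next
  case False
  have e_dep: "e \<notin> I" if "I \<in> Ind" for I
    using False matroid_indep_subset_closed[OF that, of "{e}"] by blast
  have "{I. I \<in> contract_indep Ind e \<and> I \<subseteq> X} = {I. I \<in> Ind \<and> I \<subseteq> insert e X}"
    unfolding contract_indep_def using False assms e_dep by auto
  then have "mrank (contract_indep Ind e) X = mrank Ind (insert e X)"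
    unfolding mrank_def by (simp only:)
  moreover have "{I. I \<in> Ind \<and> I \<subseteq> {e}} = {{}}"
    using e_dep matroid_empty_indep by (auto simp: subset_singleton_iff)
  then have "mrank Ind {e} = 0"
    unfolding mrank_def by (simp only: image_insert image_empty Max_singleton card.empty)
  ultimately show ?thesis by simp
qed

lemma mlambda_contract:
  assumes "e \<in> E" "X \<subseteq> E - {e}"
  shows "mlambda (contract_ground E e) (contract_indep Ind e) X =
    int (mrank Ind (insert e X)) + int (mrank Ind (E - X)) - int (mrank Ind E) - int (mrank Ind {e})"
proof -
  have "insert e (E - {e} - X) = E - X" "insert e (E - {e}) = E" using assms by auto
  then have "int (mrank (contract_indep Ind e) (E - {e} - X)) = int (mrank Ind (E - X)) - int (mrank Ind {e})"
    "int (mrank (contract_indep Ind e) (E - {e})) = int (mrank Ind E) - int (mrank Ind {e})"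
    using mrank_contract[of e "E - {e} - X"] mrank_contract[of e "E - {e}"] by simp_all
  moreover have "int (mrank (contract_indep Ind e) X) = int (mrank Ind (insert e X)) - int (mrank Ind {e})"
    using mrank_contract[of e X] assms(2) by blast
  ultimately show ?thesis unfolding mlambda_def contract_ground_def by linarith
qed

lemma mlambda_contract_le:
  assumes "e \<in> E" "X \<subseteq> E - {e}"
  shows "mlambda (contract_ground E e) (contract_indep Ind e) X \<le> mlambda E Ind X"
proof -
  have "X \<union> {e} = insert e X" "X \<inter> {e} = {}" using assms(2) by auto
  then have "mrank Ind (insert e X) \<le> mrank Ind X + mrank Ind {e}"
    using mrank_submodular[of X "{e}"] by simp
  then show ?thesis unfolding mlambda_contract[OF assms] by (simp add: mlambda_def)
qed

lemma mlambda_contract_uncross: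
  assumes "e \<in> E" "X \<subseteq> E - {e}" "U \<subseteq> E - {e}"
  shows "mlambda (contract_ground E e) (contract_indep Ind e) (X \<union> U) + mlambda E Ind (X \<inter> U)
    \<le> mlambda (contract_ground E e) (contract_indep Ind e) X + mlambda E Ind U"
proof -
  have "insert e X \<union> U = insert e (X \<union> U)" "insert e X \<inter> U = X \<inter> U" using assms(3) by auto
  then have "mrank Ind (insert e (X \<union> U)) + mrank Ind (X \<inter> U) \<le> mrank Ind (insert e X) + mrank Ind U"
    using mrank_submodular[of "insert e X" U] by simp
  moreover have "mrank Ind (E - X \<inter> U) + mrank Ind (E - (X \<union> U)) \<le> mrank Ind (E - X) + mrank Ind (E - U)"
    using mrank_submodular[of "E - X" "E - U"] by (simp add: Diff_Int Diff_Un)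
  moreover have "X \<union> U \<subseteq> E - {e}" using assms(2,3) by blast
  ultimately show ?thesis
    unfolding mlambda_contract[OF assms(1,2)] mlambda_contract[OF assms(1) \<open>X \<union> U \<subseteq> E - {e}\<close>]
    by (simp add: mlambda_def)
qed

end

lemma finite_mlambda_values: "finite E \<Longrightarrow> finite {mlambda E Ind X | X. S \<subseteq> X \<and> X \<subseteq> E - T}"
  by (rule finite_subset[of _ "mlambda E Ind ` Pow E"]) auto

lemma mkappa_le: "finite E \<Longrightarrow> S \<subseteq> X \<Longrightarrow> X \<subseteq> E - T \<Longrightarrow> mkappa E Ind S T \<le> mlambda E Ind X"
  unfolding mkappa_def by (intro Min_le finite_mlambda_values) auto

lemma mkappa_attained:
  assumes "finite E" "S \<subseteq> E - T"
  obtains X where "S \<subseteq> X" "X \<subseteq> E - T" "mkappa E Ind S T = mlambda E Ind X"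
proof -
  have "mkappa E Ind S T \<in> {mlambda E Ind X | X. S \<subseteq> X \<and> X \<subseteq> E - T}"
    unfolding mkappa_def using assms by (intro Min_in finite_mlambda_values) auto
  then show ?thesis using that by auto
qed

lemma mkappa_eq_of_minimiser:
  assumes "finite E" "S \<subseteq> U" "U \<subseteq> E - T" "mlambda E Ind U = mkappa E Ind S T"
  shows "mkappa E Ind U T = mkappa E Ind S T"
proof -
  obtain X where "U \<subseteq> X" "X \<subseteq> E - T" "mkappa E Ind U T = mlambda E Ind X"
    using mkappa_attained[OF assms(1,3)] .
  then have "mkappa E Ind S T \<le> mkappa E Ind U T"
    using mkappa_le[OF assms(1), of S X T Ind] assms(2) by auto
  moreover have "mkappa E Ind U T \<le> mlambda E Ind U" using mkappa_le[OF assms(1) _ assms(3)] by simp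
  ultimately show ?thesis using assms(4) by simp
qed

theorem lemma3p6:
  fixes E :: "'a set" and Ind :: "'a set set" and S T U :: "'a set" and e :: 'a
  assumes "matroid E Ind"
    and "S \<subseteq> E" and "T \<subseteq> E" and "S \<inter> T = {}"
    and "S \<subseteq> U" and "U \<subseteq> E - T"
    and "mlambda E Ind U = mkappa E Ind S T"
    and "e \<in> E - (T \<union> U)"
    and "mkappa (contract_ground E e) (contract_indep Ind e) S T \<noteq> mkappa E Ind S T"
  shows "mkappa (contract_ground E e) (contract_indep Ind e) U T \<noteq> mkappa E Ind U T"
proof -
  define E' where "E' = contract_ground E e"
  define Ind' where "Ind' = contract_indep Ind e"
  define k where "k = mkappa E Ind S T"
  have fin: "finite E" "finite E'"
    using matroid_finite_ground[OF assms(1)] unfolding E'_def contract_ground_def by simp_all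
  have e: "e \<in> E" and U: "U \<subseteq> E - {e}" "U \<subseteq> E' - T"
    using assms(6,8) unfolding E'_def contract_ground_def by auto
  have "mkappa E' Ind' S T \<le> mlambda E' Ind' U"
    using fin(2) assms(5) U(2) by (rule mkappa_le)
  also have "\<dots> \<le> k"
    using mlambda_contract_le[OF assms(1) e U(1)] assms(7) unfolding E'_def Ind'_def k_def by simp
  finally have "mkappa E' Ind' S T < k"
    using assms(9) unfolding k_def E'_def Ind'_def by simp
  have "S \<subseteq> E' - T" using assms(5) U(2) by (rule subset_trans)
  then obtain X where X: "S \<subseteq> X" "X \<subseteq> E' - T" "mkappa E' Ind' S T = mlambda E' Ind' X"
    by (rule mkappa_attained[OF fin(2)])
  have "X \<subseteq> E - {e}" using X(2) unfolding E'_def contract_ground_def by blast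
  then have "mlambda E' Ind' (X \<union> U) + mlambda E Ind (X \<inter> U) \<le> mlambda E' Ind' X + k"
    using mlambda_contract_uncross[OF assms(1) e _ U(1)] assms(7) unfolding E'_def Ind'_def k_def
    by simp
  moreover have "k \<le> mlambda E Ind (X \<inter> U)"
    unfolding k_def using X(1,2) assms(5,6) by (intro mkappa_le[OF fin(1)]) auto
  moreover have "mkappa E' Ind' U T \<le> mlambda E' Ind' (X \<union> U)"
    using X(2) U(2) by (intro mkappa_le[OF fin(2)]) auto
  ultimately have "mkappa E' Ind' U T < k"
    using \<open>mkappa E' Ind' S T < k\<close> X(3) by linarith
  moreover have "mkappa E Ind U T = k"
    unfolding k_def using fin(1) assms(5,6,7) by (rule mkappa_eq_of_minimiser)
  ultimately show ?thesis unfolding E'_def Ind'_def by simp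
qed

end
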